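(* Let $d\ge 2$ be an integer. Let $(\mathrm{CD}_d,H_d)$ be a combinatorial description of $\mathcal{W}_d$ which is compatible with $\mathrm{RT}$ via equivariant surjections $p_n:\mathrm{RT}(n)\to\mathrm{CD}_d(n)$. Then every $p_n$ is a bijection; that is, the only combinatorial description of $\mathcal{W}_d$ compatible with $\mathrm{RT}$ is $\mathrm{RT}$ itself (with $H_d$ corresponding to $F$).
   Context: A rooted tree on a finite vertex set $V\subset\mathbb{N}$ is a set $E$ of ordered pairs of elements of $V$ (an edge $(v,w)$ means $w$ is a child of $v$) such that exactly one vertex $r$ (the root) has no parent, every other vertex has exactly one parent, and every vertex is connected to the root by following parents. For $v\in V$, $\tau_v$ is the subtree of $v$ and all its descendants. $\mathrm{RT}(n)$ is the set of rooted trees on $[n]=\{1,\dots,n\}$; $\mathfrak{S}_n$ acts on $\mathrm{RT}(n)$ by relabelling vertices. Let $\mathcal{C}_d=C^\infty(\mathbb{R}^d,\mathbb{R}^d)$, $g_j$ the $j$-th coordinate, $\partial_j=\partial/\partial x_j$. For $\tau$ with root $r$ whose children are $v_1,\dots,v_k$, define recursively the $n$-linear map $F(\tau)((f^i)_{i\in V})=\sum_{j_1,\dots,j_k=1}^d F(\tau_{v_1})((f^i)_{i\in V(\tau_{v_1})})_{j_1}\cdots F(\tau_{v_k})((f^i)_{i\in V(\tau_{v_k})})_{j_k}\,\partial_{j_1}\cdots\partial_{j_k}f^r$ (for a single vertex $F(\tau)=f^r$). $\mathcal{W}_d(n)$ is the real vector space spanned by $\{F(\tau):\tau\in\mathrm{RT}(n)\}$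 inside the $n$-linear maps $\mathcal{C}_d^n\to\mathcal{C}_d$; $\mathfrak{S}_n$ acts on it by permuting the $n$ inputs, and $F$ is $\mathfrak{S}_n$-equivariant. A combinatorial description of $\mathcal{W}_d$ is a pair $(\mathrm{CD}_d,H_d)$ where $\mathrm{CD}_d=(\mathrm{CD}_d(n))_{n}$ is a sequence of sets, $\mathrm{CD}_d(n)$ carrying an action of $\mathfrak{S}_n$, and $H_d^n:\mathrm{CD}_d(n)\to\mathcal{W}_d(n)$ are $\mathfrak{S}_n$-equivariant maps whose images span $\mathcal{W}_d(n)$. It is compatible with $\mathrm{RT}$ if there are $\mathfrak{S}_n$-equivariant surjections $p_n:\mathrm{RT}(n)\to\mathrm{CD}_d(n)$ with $F(\tau)=H^n_d(p_n(\tau))$ for all $\tau\in\mathrm{RT}(n)$. *)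

theory Defs
  imports "HOL-Analysis.Analysis" "HOL-Combinatorics.Permutations"
begin

definition parents :: "(nat \<times> nat) set \<Rightarrow> nat \<Rightarrow> nat set" where
  "parents E v = {u. (u, v) \<in> E}"

definition children :: "(nat \<times> nat) set \<Rightarrow> nat \<Rightarrow> nat set" where
  "children E v = {w. (v, w) \<in> E}"

definition is_rooted_tree :: "nat set \<Rightarrow> (nat \<times> nat) set \<Rightarrow> bool" where
  "is_rooted_tree V E \<longleftrightarrow>
     E \<subseteq> V \<times> V \<and>
     (\<exists>!r. r \<in> V \<and> parents E r = {}) \<and>
     (\<forall>r\<in>V. parents E r = {} \<longrightarrow>
        (\<forall>v\<in>V. v \<noteq> r \<longrightarrow> (\<exists>!u. (u, v) \<in> E)) \<and>
        (\<forall>v\<in>V. (r, v) \<in> E\<^sup>*))"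

definition tree_root :: "nat set \<Rightarrow> (nat \<times> nat) set \<Rightarrow> nat" where
  "tree_root V E = (THE r. r \<in> V \<and> parents E r = {})"

definition RT :: "nat \<Rightarrow> (nat \<times> nat) set set" where
  "RT n = {E. is_rooted_tree {1..n} E}"

definition act_RT :: "(nat \<Rightarrow> nat) \<Rightarrow> (nat \<times> nat) set \<Rightarrow> (nat \<times> nat) set" where
  "act_RT \<sigma> E = (\<lambda>(v, w). (\<sigma> v, \<sigma> w)) ` E"

definition partial :: "'d::finite \<Rightarrow> (real^'d \<Rightarrow> real^'d) \<Rightarrow> (real^'d \<Rightarrow> real^'d)" where
  "partial j g = (\<lambda>x. frechet_derivative g (at x) (axis j 1))"

fun partials :: "'d::finite list \<Rightarrow> (real^'d \<Rightarrow> real^'d) \<Rightarrow> (real^'d \<Rightarrow> real^'d)" where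
  "partials [] g = g"
| "partials (j # js) g = partial j (partials js g)"

text \<open>C^infinity: every iterated partial derivative exists and is (Frechet) differentiable
  everywhere (hence all partial derivatives of all orders exist and are continuous).\<close>
definition smooth :: "(real^'d::finite \<Rightarrow> real^'d) \<Rightarrow> bool" where
  "smooth g \<longleftrightarrow> (\<forall>js x. partials js g differentiable (at x))"

text \<open>Inputs (f^i)_{i in [n]} are represented as a function from indices to vector fields.
  The recursion is made structural by a fuel parameter k; with fuel >= the number of
  vertices, it computes F of the subtree at v.\<close>
fun ed :: "nat \<Rightarrow> (nat \<times> nat) set \<Rightarrow> (nat \<Rightarrow> real^'d::finite \<Rightarrow> real^'d) \<Rightarrow> nat
           \<Rightarrow> real^'d \<Rightarrow> real^'d" where
  "ed 0 E f v = f v"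
| "ed (Suc k) E f v = (\<lambda>x.
     \<Sum>js \<in> PiE (children E v) (\<lambda>_. (UNIV :: 'd set)).
        (\<Prod>c \<in> children E v. ed k E f c x $ js c) *\<^sub>R
        partials (map js (sorted_list_of_set (children E v))) (f v) x)"

definition F :: "nat \<Rightarrow> (nat \<times> nat) set \<Rightarrow> (nat \<Rightarrow> real^'d::finite \<Rightarrow> real^'d) \<Rightarrow> real^'d \<Rightarrow> real^'d" where
  "F n E f = ed n E f (tree_root {1..n} E)"

type_synonym 'd nmap = "(nat \<Rightarrow> real^'d \<Rightarrow> real^'d) \<Rightarrow> real^'d \<Rightarrow> real^'d"

text \<open>Equality as n-linear maps C_d^n -> C_d: agreement on all tuples of smooth fields
  indexed by [n].\<close>
definition eqW :: "nat \<Rightarrow> 'd::finite nmap \<Rightarrow> 'd nmap \<Rightarrow> bool" where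
  "eqW n \<phi> \<psi> \<longleftrightarrow> (\<forall>f. (\<forall>i\<in>{1..n}. smooth (f i)) \<longrightarrow> \<phi> f = \<psi> f)"

definition inW :: "nat \<Rightarrow> 'd::finite nmap \<Rightarrow> bool" where
  "inW n \<phi> \<longleftrightarrow> (\<exists>c :: (nat \<times> nat) set \<Rightarrow> real.
      eqW n \<phi> (\<lambda>f x. \<Sum>\<tau>\<in>RT n. c \<tau> *\<^sub>R F n \<tau> f x))"

text \<open>Action of a permutation on n-linear maps by permuting the inputs; F is equivariant
  for this action: F(sigma.tau)(f) = F(tau)(f o sigma).\<close>
definition act_W :: "(nat \<Rightarrow> nat) \<Rightarrow> 'd::finite nmap \<Rightarrow> 'd nmap" where
  "act_W \<sigma> \<phi> = (\<lambda>f. \<phi> (f \<circ> \<sigma>))"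

definition is_action :: "nat \<Rightarrow> 'c set \<Rightarrow> ((nat \<Rightarrow> nat) \<Rightarrow> 'c \<Rightarrow> 'c) \<Rightarrow> bool" where
  "is_action n C a \<longleftrightarrow>
     (\<forall>\<sigma> x. \<sigma> permutes {1..n} \<longrightarrow> x \<in> C \<longrightarrow> a \<sigma> x \<in> C) \<and>
     (\<forall>x\<in>C. a id x = x) \<and>
     (\<forall>\<sigma> \<rho> x. \<sigma> permutes {1..n} \<longrightarrow> \<rho> permutes {1..n} \<longrightarrow> x \<in> C \<longrightarrow>
        a (\<sigma> \<circ> \<rho>) x = a \<sigma> (a \<rho> x))"


definition is_comb_descr ::
  "(nat \<Rightarrow> 'c set) \<Rightarrow> (nat \<Rightarrow> (nat \<Rightarrow> nat) \<Rightarrow> 'c \<Rightarrow> 'c) \<Rightarrow> (nat \<Rightarrow> 'c \<Rightarrow> 'd::finite nmap) \<Rightarrow> bool" where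
  "is_comb_descr CD a H \<longleftrightarrow> (\<forall>n.
     is_action n (CD n) (a n) \<and>
     (\<forall>c\<in>CD n. inW n (H n c)) \<and>
     (\<forall>\<sigma> c. \<sigma> permutes {1..n} \<longrightarrow> c \<in> CD n \<longrightarrow>
        eqW n (H n (a n \<sigma> c)) (act_W \<sigma> (H n c))) \<and>
     (\<forall>\<phi>. inW n \<phi> \<longrightarrow> (\<exists>C u. finite C \<and> C \<subseteq> CD n \<and>
        eqW n \<phi> (\<lambda>f x. \<Sum>c\<in>C. u c *\<^sub>R H n c f x))))"

definition compatible_RT ::
  "(nat \<Rightarrow> 'c set) \<Rightarrow> (nat \<Rightarrow> (nat \<Rightarrow> nat) \<Rightarrow> 'c \<Rightarrow> 'c) \<Rightarrow> (nat \<Rightarrow> 'c \<Rightarrow> 'd::finite nmap)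
    \<Rightarrow> (nat \<Rightarrow> (nat \<times> nat) set \<Rightarrow> 'c) \<Rightarrow> bool" where
  "compatible_RT CD a H p \<longleftrightarrow> (\<forall>n.
     p n ` RT n = CD n \<and>
     (\<forall>\<sigma> \<tau>. \<sigma> permutes {1..n} \<longrightarrow> \<tau> \<in> RT n \<longrightarrow> p n (act_RT \<sigma> \<tau>) = a n \<sigma> (p n \<tau>)) \<and>
     (\<forall>\<tau>\<in>RT n. eqW n (F n \<tau>) (H n (p n \<tau>))))"

end

(* F(tau) determines tau; since F factors as H o p, each p n is then injective.
  The edges of tau are read off from values of F(tau) at the origin. For a candidate edge
  (u, w) and two coordinates i1 ~= i2 (this is where d >= 2 enters), give w the direction
  e_i2 and every other vertex the direction e_i1, and take f^v = exp(x_i1) e_dir(v) for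
  v ~= u, f^u = x_i2 exp(x_i1) e_dir(u). At the origin only the summand choosing the direction
  of every child survives, so vertex v is differentiated once along i2 if w is a child of v
  and never otherwise. Since f^u vanishes at 0 unless differentiated exactly once along i2,
  and the other fields are killed by that derivative, F(tau)(f)(0) is nonzero iff u is the
  only parent of w in tau, i.e. iff (u, w) is an edge of tau. *)

theory Submission
  imports Defs
begin

lemma prod_of_bool:
  "finite A \<Longrightarrow> (\<Prod>x\<in>A. of_bool (P x) :: 'a::comm_semiring_1) = of_bool (\<forall>x\<in>A. P x)"
  by (induction A rule: finite_induct) auto

lemma sum_PiE_prod_delta:
  fixes b :: "'a \<Rightarrow> real" and Q :: "('a \<Rightarrow> 'b::finite) \<Rightarrow> 'v::real_vector"
  assumes "finite A"
  shows "(\<Sum>js\<in>PiE A (\<lambda>_. UNIV). (\<Prod>c\<in>A. if js c = g c then b c else 0) *\<^sub>R Q js)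
       = (\<Prod>c\<in>A. b c) *\<^sub>R Q (restrict g A)"
proof -
  have delta: "(\<Prod>c\<in>A. if js c = g c then b c else 0) *\<^sub>R Q js
      = (if js = restrict g A then (\<Prod>c\<in>A. b c) *\<^sub>R Q js else 0)"
    if "js \<in> PiE A (\<lambda>_. UNIV)" for js
  proof (cases "js = restrict g A")
    case True
    then show ?thesis by (auto intro: prod.cong)
  next
    case False
    then obtain c where c: "js c \<noteq> restrict g A c"
      by (auto simp del: restrict_apply)
    have "c \<in> A"
    proof (rule ccontr)
      assume "c \<notin> A"
      then show False using c PiE_arb[OF that] by simp
    qed
    with c False assms show ?thesis
      by (simp add: prod_zero_iff) blast
  qed
  have "(\<Sum>js\<in>PiE A (\<lambda>_. UNIV). (\<Prod>c\<in>A. if js c = g c then b c else 0) *\<^sub>R Q js)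
      = (\<Sum>js\<in>PiE A (\<lambda>_. UNIV). if js = restrict g A then (\<Prod>c\<in>A. b c) *\<^sub>R Q js else 0)"
    by (rule sum.cong[OF refl delta])
  also have "\<dots> = (\<Prod>c\<in>A. b c) *\<^sub>R Q (restrict g A)"
    using assms by (subst sum.delta) (simp_all add: finite_PiE)
  finally show ?thesis .
qed

definition exp_field :: "'d::finite \<Rightarrow> 'd \<Rightarrow> real \<Rightarrow> real \<Rightarrow> real^'d \<Rightarrow> real^'d \<Rightarrow> real^'d" where
  "exp_field i1 i2 a b e = (\<lambda>x. ((a + b * x$i2) * exp (x$i1)) *\<^sub>R e)"

lemma has_derivative_exp_field:
  "(exp_field i1 i2 a b e has_derivative
     (\<lambda>h. (b * h$i2 * exp (x$i1) + (a + b * x$i2) * exp (x$i1) * h$i1) *\<^sub>R e)) (at x)"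
  unfolding exp_field_def
  by (auto intro!: derivative_eq_intros bounded_linear_imp_has_derivative bounded_linear_vec_nth
           simp: algebra_simps)

lemma partial_exp_field:
  assumes "i1 \<noteq> i2"
  shows "partial j (exp_field i1 i2 a b e) =
    (if j = i1 then exp_field i1 i2 a b e
     else if j = i2 then exp_field i1 i2 b 0 e else exp_field i1 i2 0 0 e)"
proof
  fix x
  show "partial j (exp_field i1 i2 a b e) x = (if j = i1 then exp_field i1 i2 a b e
     else if j = i2 then exp_field i1 i2 b 0 e else exp_field i1 i2 0 0 e) x"
    unfolding partial_def frechet_derivative_at[OF has_derivative_exp_field, symmetric]
    using assms by (auto simp: exp_field_def axis_def algebra_simps)
qed

lemma partials_exp_field_closed:
  assumes "i1 \<noteq> i2"
  shows "\<exists>a' b'. partials js (exp_field i1 i2 a b e) = exp_field i1 i2 a' b' e"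
proof (induction js)
  case Nil
  show ?case by auto
next
  case (Cons j js)
  then obtain a' b' where "partials js (exp_field i1 i2 a b e) = exp_field i1 i2 a' b' e"
    by blast
  then show ?case using assms by (auto simp: partial_exp_field)
qed

lemma smooth_exp_field:
  assumes "i1 \<noteq> i2"
  shows "smooth (exp_field i1 i2 a b e)"
  unfolding smooth_def
proof (intro allI)
  fix js x
  obtain a' b' where "partials js (exp_field i1 i2 a b e) = exp_field i1 i2 a' b' e"
    using partials_exp_field_closed[OF assms] by blast
  moreover have "exp_field i1 i2 a' b' e differentiable (at x)"
    using has_derivative_exp_field by (rule differentiableI)
  ultimately show "partials js (exp_field i1 i2 a b e) differentiable (at x)"
    by simp
qed

lemma partials_exp_field:
  assumes "i1 \<noteq> i2" "set js \<subseteq> {i1, i2}"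
  shows "partials js (exp_field i1 i2 a b e) =
    (if count_list js i2 = 0 then exp_field i1 i2 a b e
     else if count_list js i2 = 1 then exp_field i1 i2 b 0 e else exp_field i1 i2 0 0 e)"
  using assms(2) by (induction js) (use assms(1) in \<open>auto simp: partial_exp_field\<close>)

lemma exp_field_at_0: "exp_field i1 i2 a b e 0 = a *\<^sub>R e"
  by (simp add: exp_field_def)

definition probe_dir :: "'d \<Rightarrow> 'd \<Rightarrow> nat \<Rightarrow> nat \<Rightarrow> 'd" where
  "probe_dir i1 i2 w v = (if v = w then i2 else i1)"

definition edge_probe :: "'d::finite \<Rightarrow> 'd \<Rightarrow> nat \<Rightarrow> nat \<Rightarrow> nat \<Rightarrow> real^'d \<Rightarrow> real^'d" where
  "edge_probe i1 i2 u w v =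
     exp_field i1 i2 (of_bool (v \<noteq> u)) (of_bool (v = u)) (axis (probe_dir i1 i2 w v) 1)"

lemma smooth_edge_probe: "i1 \<noteq> i2 \<Longrightarrow> smooth (edge_probe i1 i2 u w v)"
  unfolding edge_probe_def by (rule smooth_exp_field)

lemma count_list_map_probe_dir:
  assumes "i1 \<noteq> i2" "distinct cs"
  shows "count_list (map (probe_dir i1 i2 w) cs) i2 = of_bool (w \<in> set cs)"
  using assms(2) by (induction cs) (use assms(1) in \<open>auto simp: probe_dir_def\<close>)

lemma partials_edge_probe_at_0:
  assumes "i1 \<noteq> i2" "distinct cs"
  shows "partials (map (probe_dir i1 i2 w) cs) (edge_probe i1 i2 u w v) 0 =
    of_bool (w \<in> set cs \<longleftrightarrow> v = u) *\<^sub>R axis (probe_dir i1 i2 w v) 1"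
proof -
  have dirs: "set (map (probe_dir i1 i2 w) cs) \<subseteq> {i1, i2}"
    by (auto simp: probe_dir_def)
  show ?thesis
    unfolding edge_probe_def partials_exp_field[OF assms(1) dirs]
      count_list_map_probe_dir[OF assms]
    by (auto simp: exp_field_at_0)
qed

locale rooted_tree =
  fixes V :: "nat set" and E :: "(nat \<times> nat) set"
  assumes tree: "is_rooted_tree V E" and finite_V: "finite V"
begin

lemma edges_subset: "E \<subseteq> V \<times> V"
  using tree by (simp add: is_rooted_tree_def)

lemma root_in_V: "tree_root V E \<in> V" and no_parent_root: "(x, tree_root V E) \<notin> E"
proof -
  have "\<exists>!r. r \<in> V \<and> parents E r = {}"
    using tree by (simp add: is_rooted_tree_def)
  then have "tree_root V E \<in> V \<and> parents E (tree_root V E) = {}"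
    unfolding tree_root_def by (rule theI')
  then show "tree_root V E \<in> V" "(x, tree_root V E) \<notin> E"
    by (auto simp: parents_def)
qed

lemma unique_parent:
  "v \<in> V \<Longrightarrow> v \<noteq> tree_root V E \<Longrightarrow> (x, v) \<in> E \<Longrightarrow> (y, v) \<in> E \<Longrightarrow> x = y"
  using tree root_in_V no_parent_root unfolding is_rooted_tree_def parents_def by blast

lemma reachable_from_root: "v \<in> V \<Longrightarrow> (tree_root V E, v) \<in> E\<^sup>*"
  using tree root_in_V no_parent_root unfolding is_rooted_tree_def parents_def by blast

lemma acyclic_edges: "acyclic E"
proof -
  have "(y, y) \<notin> E\<^sup>+" if "(tree_root V E, y) \<in> E\<^sup>*" for y
    using that
  proof (induction rule: rtrancl_induct)
    case base
    show ?case using no_parent_root by (auto dest: tranclD2)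
  next
    case (step y z)
    show ?case
    proof
      assume "(z, z) \<in> E\<^sup>+"
      then obtain p where "(z, p) \<in> E\<^sup>*" "(p, z) \<in> E"
        by (auto dest: tranclD2)
      moreover have "z \<in> V" "z \<noteq> tree_root V E"
        using step.hyps(2) edges_subset no_parent_root by auto
      ultimately have "(z, y) \<in> E\<^sup>*"
        using unique_parent step.hyps(2) by blast
      with step.hyps(2) have "(y, y) \<in> E\<^sup>+"
        by (rule rtrancl_into_trancl2)
      then show False using step.IH by contradiction
    qed
  qed
  moreover have "v \<in> V" if "(v, v) \<in> E\<^sup>+" for v
    using that edges_subset trancl_subset_Sigma by blast
  ultimately show ?thesis
    unfolding acyclic_def using reachable_from_root by blast
qed

lemma children_subset: "children E v \<subseteq> V"
  using edges_subset by (auto simp: children_def)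

lemma finite_children: "finite (children E v)"
  using children_subset finite_V by (rule finite_subset)

lemma descendants_subset: "v \<in> V \<Longrightarrow> E\<^sup>* `` {v} \<subseteq> V"
  using edges_subset by (auto elim: rtranclE)

lemma descendants_root: "E\<^sup>* `` {tree_root V E} = V"
  using descendants_subset root_in_V reachable_from_root by auto

lemma descendants_unfold: "E\<^sup>* `` {v} = insert v (\<Union>c\<in>children E v. E\<^sup>* `` {c})"
  by (auto simp: children_def elim: converse_rtranclE intro: converse_rtrancl_into_rtrancl)

lemma card_descendants_child_less:
  assumes "c \<in> children E v"
  shows "card (E\<^sup>* `` {c}) < card (E\<^sup>* `` {v})"
proof (rule psubset_card_mono)
  have "v \<in> V"
    using assms edges_subset by (auto simp: children_def)
  then show "finite (E\<^sup>* `` {v})"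
    using descendants_subset finite_V finite_subset by blast
  have "v \<notin> E\<^sup>* `` {c}"
    using assms acyclic_edges
    by (auto simp: children_def acyclic_def dest: rtrancl_into_trancl2)
  then show "E\<^sup>* `` {c} \<subset> E\<^sup>* `` {v}"
    using assms descendants_unfold[of v] by blast
qed

lemma ed_edge_probe_at_0:
  assumes "i1 \<noteq> i2" "v \<in> V" "card (E\<^sup>* `` {v}) \<le> k"
  shows "ed k E (edge_probe i1 i2 u w) v 0 =
    axis (probe_dir i1 i2 w v) (of_bool (\<forall>x\<in>E\<^sup>* `` {v}. (x, w) \<in> E \<longleftrightarrow> x = u))"
  using assms(2,3)
proof (induction k arbitrary: v)
  case 0
  have "finite (E\<^sup>* `` {v})"
    using 0 descendants_subset finite_V finite_subset by blast
  then show ?case using 0 by auto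
next
  case (Suc k)
  let ?f = "edge_probe i1 i2 u w" and ?dir = "probe_dir i1 i2 w" and ?Ch = "children E v"
  define \<beta> :: "nat \<Rightarrow> real" where "\<beta> c = of_bool (\<forall>x\<in>E\<^sup>* `` {c}. (x, w) \<in> E \<longleftrightarrow> x = u)" for c
  define cs where "cs = sorted_list_of_set ?Ch"
  have cs: "set cs = ?Ch" "distinct cs"
    using finite_children by (auto simp: cs_def)
  have IH: "ed k E ?f c 0 = axis (?dir c) (\<beta> c)" if "c \<in> ?Ch" for c
  proof -
    have "c \<in> V"
      using that children_subset by blast
    moreover have "card (E\<^sup>* `` {c}) \<le> k"
      using card_descendants_child_less[OF that] Suc.prems(2) by simp
    ultimately show ?thesis
      unfolding \<beta>_def by (rule Suc.IH)
  qed
  have "ed (Suc k) E ?f v 0 = (\<Sum>js\<in>PiE ?Ch (\<lambda>_. UNIV).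
      (\<Prod>c\<in>?Ch. ed k E ?f c 0 $ js c) *\<^sub>R partials (map js cs) (?f v) 0)"
    by (simp add: cs_def)
  also have "\<dots> = (\<Sum>js\<in>PiE ?Ch (\<lambda>_. UNIV).
      (\<Prod>c\<in>?Ch. if js c = ?dir c then \<beta> c else 0) *\<^sub>R partials (map js cs) (?f v) 0)"
    by (intro sum.cong refl arg_cong2[where f = scaleR] prod.cong) (auto simp: IH axis_def)
  also have "\<dots> = (\<Prod>c\<in>?Ch. \<beta> c) *\<^sub>R partials (map (restrict ?dir ?Ch) cs) (?f v) 0"
    using finite_children by (rule sum_PiE_prod_delta)
  also have "map (restrict ?dir ?Ch) cs = map ?dir cs"
    using cs(1) by auto
  also have "partials (map ?dir cs) (?f v) 0 = of_bool ((v, w) \<in> E \<longleftrightarrow> v = u) *\<^sub>R axis (?dir v) 1"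
    using partials_edge_probe_at_0[OF assms(1) cs(2)] cs(1) by (simp add: children_def)
  also have "(\<Prod>c\<in>?Ch. \<beta> c) *\<^sub>R of_bool ((v, w) \<in> E \<longleftrightarrow> v = u) *\<^sub>R axis (?dir v) 1
      = axis (?dir v) (\<beta> v)"
    using descendants_unfold[of v]
    by (simp add: \<beta>_def prod_of_bool finite_children vec_eq_iff axis_def)
  finally show ?case by (simp only: \<beta>_def)
qed

lemma sole_parent_iff_edge:
  assumes "u \<in> V"
  shows "(\<forall>x\<in>V. (x, w) \<in> E \<longleftrightarrow> x = u) \<longleftrightarrow> (u, w) \<in> E"
  using assms unique_parent edges_subset no_parent_root by blast

end

lemma F_edge_probe_at_0:
  assumes "E \<in> RT n" "u \<in> {1..n}" "i1 \<noteq> i2"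
  shows "F n E (edge_probe i1 i2 u w) 0 =
    axis (probe_dir i1 i2 w (tree_root {1..n} E)) (of_bool ((u, w) \<in> E))"
proof -
  interpret rooted_tree "{1..n}" E
    using assms(1) by unfold_locales (simp_all add: RT_def)
  show ?thesis
    unfolding F_def
    using ed_edge_probe_at_0[OF assms(3) root_in_V] descendants_root sole_parent_iff_edge[OF assms(2)]
    by simp
qed

lemma eqW_F_imp_eq:
  assumes "CARD('d::finite) \<ge> 2" "\<tau> \<in> RT n" "\<tau>' \<in> RT n"
    and "eqW n (F n \<tau> :: 'd nmap) (F n \<tau>')"
  shows "\<tau> = \<tau>'"
proof -
  obtain i1 i2 :: 'd where "i1 \<noteq> i2"
    using assms(1) card_le_Suc0_iff_eq[of "UNIV :: 'd set"] by auto
  have "(u, w) \<in> \<tau> \<longleftrightarrow> (u, w) \<in> \<tau>'" for u w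
  proof (cases "u \<in> {1..n}")
    case True
    have "F n \<tau> (edge_probe i1 i2 u w) 0 = F n \<tau>' (edge_probe i1 i2 u w) 0"
      using assms(4) smooth_edge_probe[OF \<open>i1 \<noteq> i2\<close>] by (simp add: eqW_def)
    then show ?thesis
      using F_edge_probe_at_0[OF _ True \<open>i1 \<noteq> i2\<close>] assms(2,3) by (auto simp: axis_eq_axis)
  next
    case False
    then show ?thesis
      using assms(2,3) by (auto simp: RT_def is_rooted_tree_def)
  qed
  then show ?thesis by auto
qed

theorem theorem3p1:
  fixes CD :: "nat \<Rightarrow> 'c set"
    and a :: "nat \<Rightarrow> (nat \<Rightarrow> nat) \<Rightarrow> 'c \<Rightarrow> 'c"
    and H :: "nat \<Rightarrow> 'c \<Rightarrow> (nat \<Rightarrow> real^'d::finite \<Rightarrow> real^'d) \<Rightarrow> real^'d \<Rightarrow> real^'d"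
    and p :: "nat \<Rightarrow> (nat \<times> nat) set \<Rightarrow> 'c"
  assumes "CARD('d) \<ge> 2"
    and "is_comb_descr CD a H"
    and "compatible_RT CD a H p"
  shows "\<forall>n. bij_betw (p n) (RT n) (CD n)"
proof
  \<comment> \<open>only the factorisation F = H o p is used, not the axioms of a combinatorial description\<close>
  fix n
  have onto: "p n ` RT n = CD n" and factors: "\<forall>\<tau>\<in>RT n. eqW n (F n \<tau>) (H n (p n \<tau>))"
    using assms(3) by (simp_all add: compatible_RT_def)
  have "inj_on (p n) (RT n)"
  proof (rule inj_onI)
    fix \<tau> \<tau>' assume "\<tau> \<in> RT n" "\<tau>' \<in> RT n" "p n \<tau> = p n \<tau>'"
    then have "eqW n (F n \<tau> :: 'd nmap) (F n \<tau>')"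
      using factors unfolding eqW_def by metis
    then show "\<tau> = \<tau>'"
      using eqW_F_imp_eq[OF assms(1) \<open>\<tau> \<in> RT n\<close> \<open>\<tau>' \<in> RT n\<close>] by blast
  qed
  with onto show "bij_betw (p n) (RT n) (CD n)"
    by (simp add: bij_betw_def)
qed

end
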